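(* If $(G,\sigma)$ is a signed graph and $S$ is an $s$-redundant set of $(G,\sigma)$, then $\chi_s(G,\sigma)\le |S|+\chi_s((G,\sigma)-S)$, where $(G,\sigma)-S$ is the signed graph induced on $V(G)\setminus S$.
   Context: A signed graph $(G,\sigma)$ is a simple loopless undirected graph with a signature $\sigma:E(G)\to\{+1,-1\}$. Switching a vertex negates the signs of its incident edges; two signatures are equivalent if one is obtained from the other by switching a set of vertices. A homomorphism of $(G,\sigma)$ to $(H,\pi)$ is a graph homomorphism $\varphi:G\to H$ for which there is a signature $\sigma'$ equivalent to $\sigma$ with $\pi(\varphi(u)\varphi(v))=\sigma'(uv)$ for every edge $uv$; $\chi_s(G,\sigma)$ is the smallest order of a signed graph to which $(G,\sigma)$ admits a homomorphism. A path is unbalanced if the product of its edge signs is $-1$; $UP_3$ denotes an unbalanced path on $3$ vertices. A set $S\subseteq V(G)$ is $s$-redundant if for all $x,y\in V(G)\setminus S$ with $xy\notin E(G)$, every $z\in S$ and every signature $\sigma'$ equivalent to $\sigma$: if $xzy$ is a $UP_3$ in $(G,\sigma')$, then there exists $w\in V(G)\setminus S$ such that $xwy$ is a $UP_3$ in $(G,\sigma')$. *)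

theory Defs
  imports Main
begin

definition signed_graph :: "'a set \<Rightarrow> ('a \<Rightarrow> 'a \<Rightarrow> bool) \<Rightarrow> ('a \<Rightarrow> 'a \<Rightarrow> int) \<Rightarrow> bool" where
  "signed_graph V E sig \<longleftrightarrow>
     (\<forall>u v. E u v \<longrightarrow> u \<in> V \<and> v \<in> V) \<and>
     (\<forall>u v. E u v \<longrightarrow> E v u) \<and>
     (\<forall>u. \<not> E u u) \<and>
     (\<forall>u v. E u v \<longrightarrow> sig u v \<in> {1, -1} \<and> sig u v = sig v u)"

definition switch :: "'a set \<Rightarrow> ('a \<Rightarrow> 'a \<Rightarrow> int) \<Rightarrow> 'a \<Rightarrow> 'a \<Rightarrow> int" where
  "switch X sig u v = (if (u \<in> X) \<noteq> (v \<in> X) then - sig u v else sig u v)"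

definition equiv_sig :: "'a set \<Rightarrow> ('a \<Rightarrow> 'a \<Rightarrow> bool) \<Rightarrow> ('a \<Rightarrow> 'a \<Rightarrow> int) \<Rightarrow> ('a \<Rightarrow> 'a \<Rightarrow> int) \<Rightarrow> bool" where
  "equiv_sig V E sig sig' \<longleftrightarrow> (\<exists>X\<subseteq>V. \<forall>u v. E u v \<longrightarrow> sig' u v = switch X sig u v)"

definition signed_hom ::
  "'a set \<Rightarrow> ('a \<Rightarrow> 'a \<Rightarrow> bool) \<Rightarrow> ('a \<Rightarrow> 'a \<Rightarrow> int) \<Rightarrow>
   'b set \<Rightarrow> ('b \<Rightarrow> 'b \<Rightarrow> bool) \<Rightarrow> ('b \<Rightarrow> 'b \<Rightarrow> int) \<Rightarrow> ('a \<Rightarrow> 'b) \<Rightarrow> bool" where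
  "signed_hom V E sig W F pi phi \<longleftrightarrow>
     (\<forall>v\<in>V. phi v \<in> W) \<and>
     (\<forall>u v. E u v \<longrightarrow> F (phi u) (phi v)) \<and>
     (\<exists>sig'. equiv_sig V E sig sig' \<and> (\<forall>u v. E u v \<longrightarrow> pi (phi u) (phi v) = sig' u v))"

text \<open>Signed chromatic number: least order of a signed graph admitting a homomorphism;
  every finite signed graph is isomorphic to one on vertex set {..<n}.\<close>
definition chi_s :: "'a set \<Rightarrow> ('a \<Rightarrow> 'a \<Rightarrow> bool) \<Rightarrow> ('a \<Rightarrow> 'a \<Rightarrow> int) \<Rightarrow> nat" where
  "chi_s V E sig = (LEAST n. \<exists>(F :: nat \<Rightarrow> nat \<Rightarrow> bool) pi phi.
       signed_graph {..<n} F pi \<and> signed_hom V E sig {..<n} F pi phi)"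

definition del_edges :: "('a \<Rightarrow> 'a \<Rightarrow> bool) \<Rightarrow> 'a set \<Rightarrow> 'a \<Rightarrow> 'a \<Rightarrow> bool" where
  "del_edges E S u v \<longleftrightarrow> E u v \<and> u \<notin> S \<and> v \<notin> S"

definition UP3 :: "('a \<Rightarrow> 'a \<Rightarrow> bool) \<Rightarrow> ('a \<Rightarrow> 'a \<Rightarrow> int) \<Rightarrow> 'a \<Rightarrow> 'a \<Rightarrow> 'a \<Rightarrow> bool" where
  "UP3 E sig x z y \<longleftrightarrow> E x z \<and> E z y \<and> x \<noteq> y \<and> x \<noteq> z \<and> z \<noteq> y \<and> sig x z * sig z y = -1"

definition s_redundant :: "'a set \<Rightarrow> ('a \<Rightarrow> 'a \<Rightarrow> bool) \<Rightarrow> ('a \<Rightarrow> 'a \<Rightarrow> int) \<Rightarrow> 'a set \<Rightarrow> bool" where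
  "s_redundant V E sig S \<longleftrightarrow> S \<subseteq> V \<and>
     (\<forall>x\<in>V - S. \<forall>y\<in>V - S. \<not> E x y \<longrightarrow>
        (\<forall>z\<in>S. \<forall>sig'. equiv_sig V E sig sig' \<longrightarrow>
           UP3 E sig' x z y \<longrightarrow> (\<exists>w\<in>V - S. UP3 E sig' x w y)))"

end

theory Submission
  imports Defs
begin

text \<open>Give every vertex of S a colour of its own and keep an optimal colouring of
  (G,\<sigma>) - S. This can only fail at a vertex z of S with neighbours x, y outside S
  that share a colour but are joined to z by edges of different signs. Then x and y are
  non-adjacent and x z y is an unbalanced path, so s-redundancy provides a vertex w
  outside S for which x w y is unbalanced as well. But x w and w y are edges of
  (G,\<sigma>) - S between the same two colours, hence of equal sign, so x w y is balanced.\<close>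

text \<open>Relative to a signature s equivalent to the given one, a homomorphism to a signed
  graph on \<open>{..<n}\<close> amounts to a proper colouring with n colours under which all edges
  between two given colours carry the same sign.\<close>

definition signed_coloring ::
  "'a set \<Rightarrow> ('a \<Rightarrow> 'a \<Rightarrow> bool) \<Rightarrow> ('a \<Rightarrow> 'a \<Rightarrow> int) \<Rightarrow> nat \<Rightarrow> ('a \<Rightarrow> nat) \<Rightarrow> bool" where
  "signed_coloring V E s n c \<longleftrightarrow>
     (\<forall>v\<in>V. c v < n) \<and>
     (\<forall>u v. E u v \<longrightarrow> c u \<noteq> c v) \<and>
     (\<forall>u v u' v'. E u v \<longrightarrow> E u' v' \<longrightarrow> c u = c u' \<longrightarrow> c v = c v' \<longrightarrow> s u v = s u' v')"

lemma signed_coloring_cong: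
  assumes "\<And>u v. E u v \<Longrightarrow> s u v = s' u v"
  shows "signed_coloring V E s n c \<longleftrightarrow> signed_coloring V E s' n c"
  unfolding signed_coloring_def using assms by simp

lemma equiv_sig_refl: "equiv_sig V E sig sig"
  unfolding equiv_sig_def switch_def by (intro exI[of _ "{}"]) auto

lemma equiv_sig_sign:
  assumes "signed_graph V E sig" "equiv_sig V E sig s" "E u v"
  shows "s u v \<in> {1, -1}" "s u v = s v u"
proof -
  obtain X where "\<forall>u v. E u v \<longrightarrow> s u v = switch X sig u v"
    using assms(2) unfolding equiv_sig_def by blast
  moreover have "E v u" using assms(1,3) unfolding signed_graph_def by blast
  ultimately show "s u v \<in> {1, -1}" "s u v = s v u"
    using assms(1,3) unfolding signed_graph_def switch_def by auto
qed

lemma signed_graph_del_edges: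
  "signed_graph V E sig \<Longrightarrow> signed_graph (V - S) (del_edges E S) sig"
  unfolding signed_graph_def del_edges_def by blast

lemma equiv_sig_del_edges_extend:
  assumes "equiv_sig (V - S) (del_edges E S) sig s'"
  obtains s where "equiv_sig V E sig s" "\<And>u v. del_edges E S u v \<Longrightarrow> s u v = s' u v"
proof -
  obtain X where "X \<subseteq> V - S" "\<forall>u v. del_edges E S u v \<longrightarrow> s' u v = switch X sig u v"
    using assms unfolding equiv_sig_def by blast
  then show thesis
    by (intro that[of "switch X sig"]) (auto simp: equiv_sig_def)
qed

lemma signed_hom_of_signed_coloring:
  assumes sg: "signed_graph V E sig" and eq: "equiv_sig V E sig s"
    and col: "signed_coloring V E s n c"
  shows "\<exists>(F :: nat \<Rightarrow> nat \<Rightarrow> bool) pi. signed_graph {..<n} F pi \<and> signed_hom V E sig {..<n} F pi c"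
proof -
  have c_range: "\<forall>v\<in>V. c v < n" and c_proper: "\<And>u v. E u v \<Longrightarrow> c u \<noteq> c v"
    and c_sign: "\<And>u v u' v'. E u v \<Longrightarrow> E u' v' \<Longrightarrow> c u = c u' \<Longrightarrow> c v = c v' \<Longrightarrow> s u v = s u' v'"
    using col unfolding signed_coloring_def by blast+
  have E_sym: "E u v \<Longrightarrow> E v u" and E_in: "E u v \<Longrightarrow> u \<in> V \<and> v \<in> V" for u v
    using sg unfolding signed_graph_def by blast+
  define F where "F a b \<longleftrightarrow> (\<exists>u v. E u v \<and> c u = a \<and> c v = b)" for a b
  define pi where "pi a b = case_prod s (SOME (u, v). E u v \<and> c u = a \<and> c v = b)" for a b
  have pi_edge: "pi (c u) (c v) = s u v" if "E u v" for u v
  proof -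
    obtain u' v' where uv': "(SOME (x, y). E x y \<and> c x = c u \<and> c y = c v) = (u', v')"
      by fastforce
    have "E u' v' \<and> c u' = c u \<and> c v' = c v"
      using someI[of "\<lambda>(x, y). E x y \<and> c x = c u \<and> c y = c v" "(u, v)"] that uv'
      by simp
    then have "s u v = s u' v'"
      using c_sign[OF that] by simp
    then show ?thesis
      unfolding pi_def using uv' by simp
  qed
  have F_edge: "\<exists>u v. E u v \<and> c u = a \<and> c v = b" if "F a b" for a b
    using that unfolding F_def .
  have "signed_graph {..<n} F pi"
    unfolding signed_graph_def
  proof (intro conjI allI impI)
    show "a \<in> {..<n}" "b \<in> {..<n}" if "F a b" for a b
      using F_edge[OF that] c_range E_in by auto
    show "F b a" if "F a b" for a b
      using F_edge[OF that] E_sym unfolding F_def by blast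
    show "\<not> F a a" for a
      unfolding F_def using c_proper by metis
    show "pi a b \<in> {1, -1}" "pi a b = pi b a" if ab: "F a b" for a b
    proof -
      obtain u v where uv: "E u v" "c u = a" "c v = b" using F_edge[OF ab] by blast
      then show "pi a b \<in> {1, -1}" "pi a b = pi b a"
        using pi_edge[OF uv(1)] pi_edge[OF E_sym[OF uv(1)]] equiv_sig_sign[OF sg eq uv(1)] by auto
    qed
  qed
  moreover have "signed_hom V E sig {..<n} F pi c"
    unfolding signed_hom_def F_def using c_range eq pi_edge by blast
  ultimately show ?thesis by blast
qed

lemma signed_coloring_of_signed_hom:
  assumes "signed_graph {..<n} F pi" "signed_hom V E sig {..<n} F pi c"
  shows "\<exists>s. equiv_sig V E sig s \<and> signed_coloring V E s n c"
proof -
  obtain s where "equiv_sig V E sig s" "\<forall>u v. E u v \<longrightarrow> pi (c u) (c v) = s u v"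
    using assms(2) unfolding signed_hom_def by blast
  moreover have "signed_coloring V E s n c"
    using assms calculation(2) unfolding signed_graph_def signed_hom_def signed_coloring_def
    by (metis lessThan_iff)
  ultimately show ?thesis by blast
qed

lemma chi_s_le_signed_coloring:
  assumes "signed_graph V E sig" "equiv_sig V E sig s" "signed_coloring V E s n c"
  shows "chi_s V E sig \<le> n"
  using signed_hom_of_signed_coloring[OF assms] unfolding chi_s_def by (blast intro: Least_le)

lemma signed_coloring_inj:
  assumes "\<And>u. \<not> E u u" "inj_on c V" "\<forall>v\<in>V. c v < n" "\<And>u v. E u v \<Longrightarrow> u \<in> V \<and> v \<in> V"
  shows "signed_coloring V E s n c"
proof -
  have "c u = c v \<longleftrightarrow> u = v" if "u \<in> V" "v \<in> V" for u v
    using assms(2) that by (auto dest: inj_onD)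
  then show ?thesis
    using assms(1,3,4) unfolding signed_coloring_def by metis
qed

lemma ex_signed_coloring_chi_s:
  assumes "finite V" "signed_graph V E sig"
  obtains s c where "equiv_sig V E sig s" "signed_coloring V E s (chi_s V E sig) c"
proof -
  obtain h where "bij_betw h V {..<card V}"
    using assms(1) by (metis ex_bij_betw_finite_nat lessThan_atLeast0)
  then have "signed_coloring V E sig (card V) h"
    using assms(2) unfolding bij_betw_def signed_graph_def
    by (intro signed_coloring_inj) auto
  then have "\<exists>n (F :: nat \<Rightarrow> nat \<Rightarrow> bool) pi phi.
      signed_graph {..<n} F pi \<and> signed_hom V E sig {..<n} F pi phi"
    using signed_hom_of_signed_coloring[OF assms(2) equiv_sig_refl] by blast
  then have "\<exists>(F :: nat \<Rightarrow> nat \<Rightarrow> bool) pi phi.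
      signed_graph {..<chi_s V E sig} F pi \<and> signed_hom V E sig {..<chi_s V E sig} F pi phi"
    unfolding chi_s_def by (rule LeastI_ex)
  then show thesis
    using signed_coloring_of_signed_hom that by blast
qed

lemma s_redundant_same_sign:
  assumes sg: "signed_graph V E sig" and red: "s_redundant V E sig S"
    and eq: "equiv_sig V E sig s" and col: "signed_coloring (V - S) (del_edges E S) s k c"
    and z: "z \<in> S" and xy: "x \<notin> S" "y \<notin> S" "E z x" "E z y" "c x = c y"
  shows "s z x = s z y"
proof (rule ccontr)
  assume differ: "s z x \<noteq> s z y"
  have c_proper: "\<And>u v. del_edges E S u v \<Longrightarrow> c u \<noteq> c v"
    and c_sign: "\<And>u v u' v'. del_edges E S u v \<Longrightarrow> del_edges E S u' v' \<Longrightarrow>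
      c u = c u' \<Longrightarrow> c v = c v' \<Longrightarrow> s u v = s u' v'"
    using col unfolding signed_coloring_def by blast+
  have E_sym: "E u v \<Longrightarrow> E v u" and E_in: "E u v \<Longrightarrow> u \<in> V \<and> v \<in> V" for u v
    using sg unfolding signed_graph_def by blast+
  have in_rest: "x \<in> V - S" "y \<in> V - S"
    using xy E_in by blast+
  have non_adjacent: "\<not> E x y"
    using c_proper xy unfolding del_edges_def by blast
  have "s x z * s z y = -1"
    using differ equiv_sig_sign[OF sg eq xy(3)] equiv_sig_sign[OF sg eq xy(4)] by auto
  then have "UP3 E s x z y"
    unfolding UP3_def using differ z xy E_sym by blast
  then obtain w where w: "w \<in> V - S" "UP3 E s x w y"
    using red eq in_rest non_adjacent z unfolding s_redundant_def by blast
  then have xw: "del_edges E S x w" and wy: "del_edges E S w y" and unbalanced: "s x w * s w y = -1"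
    using xy E_sym unfolding UP3_def del_edges_def by blast+
  \<comment> \<open>w y and w x join the same two colours\<close>
  have "s w y = s w x"
    using c_sign[OF wy] xw xy(5) E_sym unfolding del_edges_def by metis
  also have "\<dots> = s x w"
    using equiv_sig_sign[OF sg eq] xw unfolding del_edges_def by metis
  finally have "s w y = s x w" .
  moreover have "s x w \<in> {1, -1}"
    using equiv_sig_sign(1)[OF sg eq] xw unfolding del_edges_def by blast
  ultimately show False
    using unbalanced by auto
qed

lemma signed_coloring_extend_fresh:
  assumes sg: "signed_graph V E sig" and red: "s_redundant V E sig S"
    and eq: "equiv_sig V E sig s" and col: "signed_coloring (V - S) (del_edges E S) s k c"
    and g: "inj_on g S" "\<forall>v\<in>S. g v < m"
  shows "signed_coloring V E s (k + m) (\<lambda>v. if v \<in> S then k + g v else c v)"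
proof -
  define d where "d v = (if v \<in> S then k + g v else c v)" for v
  have c_range: "\<forall>v\<in>V - S. c v < k" and c_proper: "\<And>u v. del_edges E S u v \<Longrightarrow> c u \<noteq> c v"
    and c_sign: "\<And>u v u' v'. del_edges E S u v \<Longrightarrow> del_edges E S u' v' \<Longrightarrow>
      c u = c u' \<Longrightarrow> c v = c v' \<Longrightarrow> s u v = s u' v'"
    using col unfolding signed_coloring_def by blast+
  have E_sym: "E u v \<Longrightarrow> E v u" and E_in: "E u v \<Longrightarrow> u \<in> V \<and> v \<in> V"
    and E_irrefl: "\<not> E u u" for u v
    using sg unfolding signed_graph_def by blast+
  have d_eq_S: "d u = d v \<longleftrightarrow> u = v" if "u \<in> S" "v \<in> V" for u v
    using that c_range g(1) unfolding d_def inj_on_def by (auto dest: bspec)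
  have d_eq_rest: "d u = d v \<longleftrightarrow> v \<notin> S \<and> c u = c v" if "u \<in> V - S" "v \<in> V" for u v
    using that c_range unfolding d_def by (auto dest: bspec)
  have d_sign_from_S: "s u v = s u v'"
    if "u \<in> S" "E u v" "E u v'" "d v = d v'" for u v v'
  proof (cases "v \<in> S")
    case True
    then show ?thesis using d_eq_S that E_in by metis
  next
    case False
    then have "v' \<notin> S" "c v = c v'" using d_eq_rest that E_in by blast+
    then show ?thesis
      using s_redundant_same_sign[OF sg red eq col] False that by blast
  qed
  have "\<forall>v\<in>V. d v < k + m"
    using c_range g(2) unfolding d_def by (auto intro: trans_less_add1)
  moreover have "d u \<noteq> d v" if "E u v" for u v
    using d_eq_S d_eq_rest E_in[OF that] E_irrefl c_proper[of u v] that
    unfolding del_edges_def by (metis DiffI)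
  moreover have "s u v = s u' v'"
    if uv: "E u v" "E u' v'" "d u = d u'" "d v = d v'" for u v u' v'
  proof -
    consider "u \<in> S" | "v \<in> S" | "u \<notin> S" "v \<notin> S" by blast
    then show ?thesis
    proof cases
      case 1
      then have "u' = u" using d_eq_S uv E_in by metis
      then show ?thesis using d_sign_from_S 1 uv by metis
    next
      case 2
      then have "v' = v" using d_eq_S uv E_in by metis
      then have "s v u = s v' u'"
        using d_sign_from_S 2 uv E_sym by metis
      then show ?thesis using equiv_sig_sign(2)[OF sg eq] uv by metis
    next
      case 3
      then have "u' \<notin> S" "v' \<notin> S" "c u = c u'" "c v = c v'"
        using d_eq_rest uv E_in by blast+
      then show ?thesis
        using c_sign[of u v u' v'] 3 uv unfolding del_edges_def by blast
    qed
  qed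
  ultimately show ?thesis
    unfolding signed_coloring_def d_def by blast
qed

theorem theorem5p3:
  fixes V :: "'a set" and E :: "'a \<Rightarrow> 'a \<Rightarrow> bool" and sig :: "'a \<Rightarrow> 'a \<Rightarrow> int" and S :: "'a set"
  assumes "finite V" and "signed_graph V E sig" and "s_redundant V E sig S"
  shows "chi_s V E sig \<le> card S + chi_s (V - S) (del_edges E S) sig"
proof -
  let ?k = "chi_s (V - S) (del_edges E S) sig"
  obtain s' c where eq': "equiv_sig (V - S) (del_edges E S) sig s'"
    and col': "signed_coloring (V - S) (del_edges E S) s' ?k c"
    using ex_signed_coloring_chi_s[OF _ signed_graph_del_edges[OF assms(2)]] assms(1) by blast
  obtain s where eq: "equiv_sig V E sig s" and agree: "\<And>u v. del_edges E S u v \<Longrightarrow> s u v = s' u v"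
    using equiv_sig_del_edges_extend[OF eq'] by blast
  have col: "signed_coloring (V - S) (del_edges E S) s ?k c"
    using signed_coloring_cong[of "del_edges E S" s s', OF agree] col' by simp
  have "finite S"
    using assms(1,3) unfolding s_redundant_def by (blast intro: finite_subset)
  then obtain g where "bij_betw g S {..<card S}"
    by (metis ex_bij_betw_finite_nat lessThan_atLeast0)
  then have "signed_coloring V E s (?k + card S) (\<lambda>v. if v \<in> S then ?k + g v else c v)"
    using signed_coloring_extend_fresh[OF assms(2,3) eq col] unfolding bij_betw_def by auto
  then show ?thesis
    using chi_s_le_signed_coloring[OF assms(2) eq] by fastforce
qed

end
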